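(* Let $\phi$ be any random number generation algorithm for $Y^n$ from the coin process $\mathbf X$ that satisfies the validity condition, and let $T$ be its stopping time. Then for every integer $m\ge 0$ and all real numbers $\tau,\lambda\ge 0$, \[ \Pr(T>m)\ \ge\ P_{Y^n}(\mathcal T_n^c(\tau)) - P_{X^m}(\mathcal S_m(\lambda)) - 2^{-\tau+\lambda} \ =\ P_{X^m}(\mathcal S_m^c(\lambda)) - P_{Y^n}(\mathcal T_n(\tau)) - 2^{-\tau+\lambda}, \] where \[ \mathcal S_m(\lambda)=\Big\{x^m\in\mathcal X^m:\log\tfrac{1}{P_{X^m}(x^m)}\ge\lambda\Big\},\qquad \mathcal T_n(\tau)=\Big\{y^n\in\mathcal Y^n:\log\tfrac{1}{P_{Y^n}(y^n)}\le\tau\Big\}, \] and complements are taken in $\mathcal X^m$ and $\mathcal Y^n$ respectively.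
   Context: Logarithms are base 2. Let $\mathcal X=\{1,\dots,M\}$ and $\mathcal Y=\{1,\dots,N\}$ be finite sets. The coin process $\mathbf X=\{X^m=(X_1,\dots,X_m)\}_{m\ge1}$ is a sequence of random vectors with distributions $P_{X^m}$ on $\mathcal X^m$ that are consistent ($\sum_{x_{m+1}}P_{X^{m+1}}(x^m,x_{m+1})=P_{X^m}(x^m)$), i.e. the finite-dimensional marginals of one random sequence $X_1,X_2,\dots$ (arbitrary, not necessarily stationary or ergodic); the target process $\mathbf Y=\{Y^n\}_{n\ge1}$ on $\mathcal Y$ is defined likewise. A random number generation (RNG) algorithm for $Y^n$ is a map $\phi:\bigcup_{i\ge0}\mathcal X^i\to\{\bot\}\cup\mathcal Y^n$, where $\mathcal X^0=\{\bot\}$ consists of the empty sequence. Its set of leaves $\mathcal L_\phi$ is the set of finite sequences $s$ with $\phi(s)\in\mathcal Y^n$ and $\phi(s')=\bot$ for every proper prefix $s'$ of $s$; $|s|$ is the length of $s$. For $x^m\in\mathcal X^m$ one writes $\phi(x^m)=y^n$ if some prefix $x^i$ ($i\le m$) of $x^m$ is a leaf with $\phi(x^i)=y^n$, and $\phi(x^m)=\bot$ otherwise. The stopping time $T$ is the smallest integer $m\ge0$ with $\phi(X^m)\in\mathcal Y^n$ ($T=\infty$ if there is none). The algorithm satisfies the validity condition if $\sum_{s\in\mathcal L_\phi:\,\phi(s)=y^n}P_{X^{|s|}}(s)=P_{Y^n}(y^n)$ for every $y^n\in\mathcal Y^n$ (equivalently $\lim_{m\to\infty}\Pr(\phi(X^m)=y^n)=P_{Y^n}(y^n)$).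 *)

theory Defs
  imports "HOL-Analysis.Analysis"
begin

text \<open>Sequences over a finite alphabet are lists; P k is the distribution of the
  first k symbols, as a function on lists (only lists of length k matter).\<close>

definition random_process :: "(nat \<Rightarrow> 'a::finite list \<Rightarrow> real) \<Rightarrow> bool" where
  "random_process P \<longleftrightarrow>
     (\<forall>k xs. P k xs \<ge> 0) \<and>
     (\<forall>k. (\<Sum>xs\<in>{xs. length xs = k}. P k xs) = 1) \<and>
     (\<forall>k xs. length xs = k \<longrightarrow> (\<Sum>x\<in>UNIV. P (Suc k) (xs @ [x])) = P k xs)"

text \<open>An RNG algorithm: None plays the role of \<bottom>; outputs lie in Y^n.\<close>
definition rng_algorithm :: "nat \<Rightarrow> ('a list \<Rightarrow> 'b list option) \<Rightarrow> bool" where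
  "rng_algorithm n phi \<longleftrightarrow> (\<forall>s y. phi s = Some y \<longrightarrow> length y = n)"

definition is_leaf :: "('a list \<Rightarrow> 'b list option) \<Rightarrow> 'a list \<Rightarrow> bool" where
  "is_leaf phi s \<longleftrightarrow> phi s \<noteq> None \<and> (\<forall>i<length s. phi (take i s) = None)"

definition valid_rng ::
  "(nat \<Rightarrow> 'a list \<Rightarrow> real) \<Rightarrow> (nat \<Rightarrow> 'b list \<Rightarrow> real) \<Rightarrow> nat \<Rightarrow> ('a list \<Rightarrow> 'b list option) \<Rightarrow> bool" where
  "valid_rng PX PY n phi \<longleftrightarrow>
     (\<forall>y. length y = n \<longrightarrow>
        ((\<lambda>s. PX (length s) s) has_sum PY n y) {s. is_leaf phi s \<and> phi s = Some y})"

text \<open>phi(x^m) = y^n iff some prefix x^i (i \<le> m) is a leaf mapped to y^n.\<close>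
definition phi_ext :: "('a list \<Rightarrow> 'b list option) \<Rightarrow> 'a list \<Rightarrow> 'b list option" where
  "phi_ext phi xs =
     (if \<exists>i\<le>length xs. is_leaf phi (take i xs)
      then phi (take (LEAST i. is_leaf phi (take i xs)) xs) else None)"

text \<open>Pr(T > m) = Pr(phi(X^m) = \<bottom>).\<close>
definition prob_T_gt ::
  "(nat \<Rightarrow> 'a list \<Rightarrow> real) \<Rightarrow> ('a list \<Rightarrow> 'b list option) \<Rightarrow> nat \<Rightarrow> real" where
  "prob_T_gt PX phi m = (\<Sum>xs\<in>{xs. length xs = m \<and> phi_ext phi xs = None}. PX m xs)"

text \<open>Convention: log(1/0) = \<infinity>.\<close>
definition S_set :: "(nat \<Rightarrow> 'a list \<Rightarrow> real) \<Rightarrow> nat \<Rightarrow> real \<Rightarrow> 'a list set" where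
  "S_set PX m lam = {xs. length xs = m \<and> (PX m xs = 0 \<or> log 2 (1 / PX m xs) \<ge> lam)}"

definition T_set :: "(nat \<Rightarrow> 'b list \<Rightarrow> real) \<Rightarrow> nat \<Rightarrow> real \<Rightarrow> 'b list set" where
  "T_set PY n tau = {ys. length ys = n \<and> PY n ys \<noteq> 0 \<and> log 2 (1 / PY n ys) \<le> tau}"

definition prob_of :: "(nat \<Rightarrow> 'a list \<Rightarrow> real) \<Rightarrow> nat \<Rightarrow> 'a list set \<Rightarrow> real" where
  "prob_of P k A = (\<Sum>xs\<in>A. P k xs)"

end

theory Submission
  imports Defs
begin

text \<open>Every run halting within m coin flips is an extension of a leaf of length at most m,
  and by validity the leaves mapped to y^n carry total mass P_Y(y^n). Hence the outputs
  y^n \<in> T_n(\<tau>) are reached by runs outside S_m(\<lambda>) with probability at most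
  P_Y(T_n(\<tau>)), while each remaining output has probability at most 2^-\<tau> and
  there are at most |S_m^c(\<lambda>)| \<le> 2^\<lambda> of them. So
  Pr(T \<le> m) \<le> P_X(S_m(\<lambda>)) + P_Y(T_n(\<tau>)) + 2^(\<lambda>-\<tau>).\<close>

declare finite_list_length [simp]

lemma random_process_nonneg: "random_process P \<Longrightarrow> P k xs \<ge> 0"
  unfolding random_process_def by blast

lemma random_process_sum_eq_1: "random_process P \<Longrightarrow> (\<Sum>xs | length xs = k. P k xs) = 1"
  unfolding random_process_def by blast

lemma random_process_consistent:
  "random_process P \<Longrightarrow> length xs = k \<Longrightarrow> (\<Sum>x\<in>UNIV. P (Suc k) (xs @ [x])) = P k xs"
  unfolding random_process_def by blast

lemma prob_of_complement:
  fixes P :: "nat \<Rightarrow> 'a::finite list \<Rightarrow> real"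
  assumes "random_process P" and "A \<subseteq> {xs. length xs = k}"
  shows "prob_of P k ({xs. length xs = k} - A) = 1 - prob_of P k A"
  using assms finite_subset[OF assms(2) finite_list_length]
  by (simp add: prob_of_def sum_diff random_process_sum_eq_1)

lemma lists_length_Suc_eq_snoc:
  "{xs. length xs = Suc d} = (\<lambda>(zs, x). zs @ [x]) ` ({zs. length zs = d} \<times> UNIV)"
proof (intro set_eqI iffI)
  fix xs :: "'a list"
  assume "xs \<in> {xs. length xs = Suc d}"
  then have "xs = butlast xs @ [last xs]" and "length (butlast xs) = d"
    by (auto intro: append_butlast_last_id[symmetric])
  then show "xs \<in> (\<lambda>(zs, x). zs @ [x]) ` ({zs. length zs = d} \<times> UNIV)"
    by (metis (mono_tags, lifting) SigmaI UNIV_I case_prod_conv image_eqI mem_Collect_eq)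
qed auto

lemma random_process_sum_extensions:
  fixes P :: "nat \<Rightarrow> 'a::finite list \<Rightarrow> real"
  assumes "random_process P" and "length s = k"
  shows "(\<Sum>zs | length zs = d. P (k + d) (s @ zs)) = P k s"
proof (induction d)
  case 0
  then show ?case by simp
next
  case (Suc d)
  have inj: "inj_on (\<lambda>(zs, x). zs @ [x]) ({zs :: 'a list. length zs = d} \<times> UNIV)"
    by (auto simp: inj_on_def)
  have "(\<Sum>zs | length zs = Suc d. P (k + Suc d) (s @ zs))
      = (\<Sum>zs | length zs = d. \<Sum>x\<in>UNIV. P (Suc (k + d)) ((s @ zs) @ [x]))"
    unfolding lists_length_Suc_eq_snoc sum.reindex[OF inj]
    by (simp add: sum.cartesian_product split_def)
  also have "\<dots> = (\<Sum>zs | length zs = d. P (k + d) (s @ zs))"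
  proof (rule sum.cong)
    fix zs :: "'a list"
    assume "zs \<in> {zs. length zs = d}"
    then show "(\<Sum>x\<in>UNIV. P (Suc (k + d)) ((s @ zs) @ [x])) = P (k + d) (s @ zs)"
      using assms by (intro random_process_consistent) auto
  qed simp
  finally show ?case using Suc by simp
qed

lemma random_process_sum_extensions_to_length:
  fixes P :: "nat \<Rightarrow> 'a::finite list \<Rightarrow> real"
  assumes "random_process P" and "length s \<le> m"
  shows "(\<Sum>xs\<in>(@) s ` {zs. length zs = m - length s}. P m xs) = P (length s) s"
proof -
  have "(\<Sum>xs\<in>(@) s ` {zs. length zs = m - length s}. P m xs)
      = (\<Sum>zs | length zs = m - length s. P m (s @ zs))"
    by (rule sum.reindex_cong[OF _ refl]) (simp_all add: inj_on_def)
  also have "\<dots> = P (length s) s"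
    using random_process_sum_extensions[OF assms(1) refl, of s "m - length s"] assms(2)
    by simp
  finally show ?thesis .
qed

lemma phi_ext_Some_leaf_prefix:
  assumes "phi_ext phi xs = Some y"
  shows "\<exists>s zs. is_leaf phi s \<and> phi s = Some y \<and> xs = s @ zs"
proof -
  define i where "i = (LEAST i. is_leaf phi (take i xs))"
  have ex: "\<exists>i\<le>length xs. is_leaf phi (take i xs)"
    using assms unfolding phi_ext_def by (auto split: if_splits)
  then have "is_leaf phi (take i xs)"
    unfolding i_def by (meson LeastI)
  moreover have "phi (take i xs) = Some y"
    using assms ex unfolding phi_ext_def i_def by simp
  ultimately show ?thesis
    by (metis append_take_drop_id)
qed

lemma valid_rng_prob_output_le:
  fixes PX :: "nat \<Rightarrow> 'a::finite list \<Rightarrow> real"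
  assumes "random_process PX" and "valid_rng PX PY n phi" and "length y = n"
  shows "(\<Sum>xs | length xs = m \<and> phi_ext phi xs = Some y. PX m xs) \<le> PY n y"
proof -
  let ?D = "{xs. length xs = m \<and> phi_ext phi xs = Some y}"
  let ?L = "{s. is_leaf phi s \<and> phi s = Some y \<and> length s \<le> m}"
  let ?ext = "\<lambda>s. (@) s ` {zs. length zs = m - length s}"
  define leaf where "leaf xs = (SOME s. is_leaf phi s \<and> phi s = Some y \<and> (\<exists>zs. xs = s @ zs))"
    for xs
  have below_leaf: "s \<in> ?L \<and> xs \<in> ?ext s"
    if "is_leaf phi s" "phi s = Some y" "xs = s @ zs" "length xs = m" for s zs xs
  proof
    show "s \<in> ?L"
      using that by simp
    have "s @ zs \<in> ?ext s"
      by (rule imageI) (use that in simp)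
    then show "xs \<in> ?ext s"
      using that(3) by simp
  qed
  have leaf: "leaf xs \<in> ?L \<and> xs \<in> ?ext (leaf xs)" if "xs \<in> ?D" for xs
  proof -
    have "is_leaf phi (leaf xs) \<and> phi (leaf xs) = Some y \<and> (\<exists>zs. xs = leaf xs @ zs)"
      unfolding leaf_def by (rule someI_ex) (use that phi_ext_Some_leaf_prefix in blast)
    then obtain zs where "is_leaf phi (leaf xs)" "phi (leaf xs) = Some y" "xs = leaf xs @ zs"
      by blast
    then show ?thesis
      using below_leaf that by blast
  qed
  have fin_L: "finite ?L"
    by (rule finite_subset[of _ "\<Union>k\<le>m. {s. length s = k}"]) auto
  have "(\<Sum>xs\<in>?D. PX m xs) = (\<Sum>s\<in>?L. \<Sum>xs | xs \<in> ?D \<and> leaf xs = s. PX m xs)"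
    using leaf fin_L by (intro sum.group[symmetric]) auto
  also have "\<dots> \<le> (\<Sum>s\<in>?L. \<Sum>xs\<in>?ext s. PX m xs)"
    using leaf assms(1)
    by (intro sum_mono sum_mono2) (auto intro: random_process_nonneg)
  also have "\<dots> = (\<Sum>s\<in>?L. PX (length s) s)"
    using assms(1) by (intro sum.cong) (auto simp: random_process_sum_extensions_to_length)
  also have "\<dots> \<le> PY n y"
  proof (rule has_sum_mono_neutral)
    show "((\<lambda>s. PX (length s) s) has_sum (\<Sum>s\<in>?L. PX (length s) s)) ?L"
      using fin_L by simp
    show "((\<lambda>s. PX (length s) s) has_sum PY n y) {s. is_leaf phi s \<and> phi s = Some y}"
      using assms(2,3) unfolding valid_rng_def by blast
  qed (use fin_L assms(1) in \<open>auto intro: random_process_nonneg\<close>)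
  finally show ?thesis .
qed

lemma notin_T_set_le_powr:
  assumes "PY n ys \<ge> 0" and "length ys = n" and "ys \<notin> T_set PY n tau"
  shows "PY n ys \<le> 2 powr - tau"
proof (cases "PY n ys = 0")
  case False
  with assms have "PY n ys > 0" and "tau < log 2 (1 / PY n ys)"
    by (auto simp: T_set_def)
  then have "PY n ys < 1 / 2 powr tau"
    by (simp add: less_log_iff field_simps)
  then show ?thesis
    by (simp add: powr_minus_divide)
qed simp

lemma notin_S_set_ge_powr:
  assumes "PX m xs \<ge> 0" and "length xs = m" and "xs \<notin> S_set PX m lam"
  shows "2 powr - lam \<le> PX m xs"
proof -
  from assms have "PX m xs > 0" and "log 2 (1 / PX m xs) < lam"
    by (auto simp: S_set_def)
  then have "1 / 2 powr lam < PX m xs"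
    by (simp add: log_less_iff field_simps)
  then show ?thesis
    by (simp add: powr_minus_divide)
qed

lemma card_compl_S_set_le:
  fixes PX :: "nat \<Rightarrow> 'a::finite list \<Rightarrow> real"
  assumes "random_process PX"
  shows "real (card ({xs. length xs = m} - S_set PX m lam)) \<le> 2 powr lam"
proof -
  let ?C = "{xs. length xs = m} - S_set PX m lam"
  have "real (card ?C) * 2 powr - lam = (\<Sum>xs\<in>?C. 2 powr - lam)"
    by simp
  also have "\<dots> \<le> (\<Sum>xs\<in>?C. PX m xs)"
    using assms by (intro sum_mono notin_S_set_ge_powr random_process_nonneg) auto
  also have "\<dots> \<le> (\<Sum>xs | length xs = m. PX m xs)"
    using assms by (intro sum_mono2) (auto intro: random_process_nonneg)
  also have "\<dots> = 1"
    using assms by (rule random_process_sum_eq_1)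
  finally show ?thesis
    by (simp add: powr_minus_divide field_simps)
qed

lemma sum_le_by_dominated_fibres:
  fixes f :: "'a \<Rightarrow> real" and q :: "'b \<Rightarrow> real"
  assumes "finite A" and "finite T"
    and fibre: "\<And>y. y \<in> h ` A \<Longrightarrow> (\<Sum>x | x \<in> A \<and> h x = y. f x) \<le> q y"
    and small: "\<And>y. y \<in> h ` A - T \<Longrightarrow> q y \<le> c"
    and nonneg: "\<And>y. y \<in> T \<Longrightarrow> q y \<ge> 0"
  shows "sum f A \<le> sum q T + real (card (h ` A - T)) * c"
proof -
  define g where "g y = (\<Sum>x | x \<in> A \<and> h x = y. f x)" for y
  have "sum f A = sum g (h ` A)"
    unfolding g_def using assms(1) by (intro sum.group[symmetric]) auto
  also have "\<dots> = sum g (h ` A \<inter> T) + sum g (h ` A - T)"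
    using assms(1) by (intro sum.Int_Diff) simp
  also have "sum g (h ` A \<inter> T) \<le> sum q T"
  proof -
    have "sum g (h ` A \<inter> T) \<le> sum q (h ` A \<inter> T)"
      unfolding g_def by (intro sum_mono fibre) simp
    also have "\<dots> \<le> sum q T"
      using assms(2) nonneg by (intro sum_mono2) auto
    finally show ?thesis .
  qed
  also have "sum g (h ` A - T) \<le> (\<Sum>y\<in>h ` A - T. c)"
    unfolding g_def using fibre small by (intro sum_mono) (blast intro: order.trans)
  finally show ?thesis
    by simp
qed

lemma prob_halted_outside_S_set_le:
  fixes PX :: "nat \<Rightarrow> 'a::finite list \<Rightarrow> real"
    and PY :: "nat \<Rightarrow> 'b::finite list \<Rightarrow> real"
  assumes "random_process PX" and "random_process PY"
    and "rng_algorithm n phi" and "valid_rng PX PY n phi"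
  shows "(\<Sum>xs | length xs = m \<and> phi_ext phi xs \<noteq> None \<and> xs \<notin> S_set PX m lam. PX m xs)
           \<le> prob_of PY n (T_set PY n tau) + 2 powr (lam - tau)"
proof -
  let ?A = "{xs. length xs = m \<and> phi_ext phi xs \<noteq> None \<and> xs \<notin> S_set PX m lam}"
  let ?out = "\<lambda>xs. the (phi_ext phi xs)"
  have out_length: "length y = n" if "y \<in> ?out ` ?A" for y
    using that assms(3) phi_ext_Some_leaf_prefix
    unfolding rng_algorithm_def by fastforce
  have "sum (PX m) ?A
        \<le> sum (PY n) (T_set PY n tau) + real (card (?out ` ?A - T_set PY n tau)) * 2 powr - tau"
  proof (rule sum_le_by_dominated_fibres)
    fix y
    assume y: "y \<in> ?out ` ?A"
    have "(\<Sum>xs | xs \<in> ?A \<and> ?out xs = y. PX m xs)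
          \<le> (\<Sum>xs | length xs = m \<and> phi_ext phi xs = Some y. PX m xs)"
      using assms(1) by (intro sum_mono2) (auto intro: random_process_nonneg)
    also have "\<dots> \<le> PY n y"
      using assms(1,4) out_length[OF y] by (rule valid_rng_prob_output_le)
    finally show "(\<Sum>xs | xs \<in> ?A \<and> ?out xs = y. PX m xs) \<le> PY n y" .
  next
    fix y
    assume "y \<in> ?out ` ?A - T_set PY n tau"
    then show "PY n y \<le> 2 powr - tau"
      using assms(2) out_length by (intro notin_T_set_le_powr random_process_nonneg) auto
  qed (use assms(2) in \<open>auto intro: random_process_nonneg finite_subset[OF _ finite_list_length]
                         simp: T_set_def\<close>)
  also have "real (card (?out ` ?A - T_set PY n tau)) \<le> 2 powr lam"
  proof -
    have "card (?out ` ?A - T_set PY n tau) \<le> card ({xs. length xs = m} - S_set PX m lam)"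
      by (rule order.trans[OF card_mono card_image_le]) (auto intro: card_mono)
    then show ?thesis
      using card_compl_S_set_le[OF assms(1), of m lam] by linarith
  qed
  also have "2 powr lam * 2 powr - tau = 2 powr (lam - tau)"
    using powr_add[of 2 lam "- tau"] by simp
  finally show ?thesis
    unfolding prob_of_def by simp
qed

lemma prob_halted_le:
  fixes PX :: "nat \<Rightarrow> 'a::finite list \<Rightarrow> real"
    and PY :: "nat \<Rightarrow> 'b::finite list \<Rightarrow> real"
  assumes "random_process PX" and "random_process PY"
    and "rng_algorithm n phi" and "valid_rng PX PY n phi"
  shows "(\<Sum>xs | length xs = m \<and> phi_ext phi xs \<noteq> None. PX m xs)
           \<le> prob_of PX m (S_set PX m lam) + prob_of PY n (T_set PY n tau) + 2 powr (lam - tau)"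
proof -
  let ?S = "S_set PX m lam"
  let ?N = "{xs. length xs = m \<and> phi_ext phi xs \<noteq> None}"
  have fin: "finite ?N" "finite ?S"
    by (auto intro: finite_subset[OF _ finite_list_length] simp: S_set_def)
  have "(\<Sum>xs\<in>?N. PX m xs) \<le> (\<Sum>xs\<in>?S \<union> (?N - ?S). PX m xs)"
    using fin assms(1) by (intro sum_mono2) (auto intro: random_process_nonneg)
  also have "\<dots> = prob_of PX m ?S + (\<Sum>xs\<in>?N - ?S. PX m xs)"
    unfolding prob_of_def using fin by (intro sum.union_disjoint) auto
  also have "?N - ?S = {xs. length xs = m \<and> phi_ext phi xs \<noteq> None \<and> xs \<notin> ?S}"
    by blast
  finally show ?thesis
    using prob_halted_outside_S_set_le[OF assms, of m lam tau] by linarith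
qed

lemma prob_T_gt_eq:
  fixes PX :: "nat \<Rightarrow> 'a::finite list \<Rightarrow> real"
  assumes "random_process PX"
  shows "prob_T_gt PX phi m = 1 - (\<Sum>xs | length xs = m \<and> phi_ext phi xs \<noteq> None. PX m xs)"
proof -
  let ?H = "{xs. length xs = m \<and> phi_ext phi xs \<noteq> None}"
  have "prob_T_gt PX phi m = prob_of PX m ({xs. length xs = m} - ?H)"
    unfolding prob_T_gt_def prob_of_def by (rule sum.cong) auto
  also have "\<dots> = 1 - prob_of PX m ?H"
    using assms by (rule prob_of_complement) auto
  finally show ?thesis
    unfolding prob_of_def .
qed

theorem theorem1:
  fixes PX :: "nat \<Rightarrow> 'a::finite list \<Rightarrow> real"
    and PY :: "nat \<Rightarrow> 'b::finite list \<Rightarrow> real"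
    and phi :: "'a list \<Rightarrow> 'b list option"
    and n m :: nat and tau lam :: real
  assumes "random_process PX" and "random_process PY"
    and "rng_algorithm n phi" and "valid_rng PX PY n phi"
    and "tau \<ge> 0" and "lam \<ge> 0"
  shows "prob_T_gt PX phi m \<ge>
           prob_of PY n ({ys. length ys = n} - T_set PY n tau) - prob_of PX m (S_set PX m lam)
             - 2 powr (- tau + lam)
       \<and> prob_of PY n ({ys. length ys = n} - T_set PY n tau) - prob_of PX m (S_set PX m lam)
             - 2 powr (- tau + lam)
         = prob_of PX m ({xs. length xs = m} - S_set PX m lam) - prob_of PY n (T_set PY n tau)
             - 2 powr (- tau + lam)"
proof -
  \<comment> \<open>The bound holds for all real \<open>tau\<close> and \<open>lam\<close>.\<close>
  have "prob_of PY n ({ys. length ys = n} - T_set PY n tau) = 1 - prob_of PY n (T_set PY n tau)"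
    using assms(2) by (rule prob_of_complement) (auto simp: T_set_def)
  moreover have "prob_of PX m ({xs. length xs = m} - S_set PX m lam)
                   = 1 - prob_of PX m (S_set PX m lam)"
    using assms(1) by (rule prob_of_complement) (auto simp: S_set_def)
  moreover have "prob_T_gt PX phi m
                   \<ge> 1 - prob_of PX m (S_set PX m lam) - prob_of PY n (T_set PY n tau)
                       - 2 powr (lam - tau)"
    using prob_halted_le[OF assms(1-4), of m lam tau] prob_T_gt_eq[OF assms(1), of phi m]
    by linarith
  ultimately show ?thesis
    by simp
qed

end
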